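(* Let $\Gamma_M$ be a perfect matching graph representing a planar trivalent graph $G$ with perfect matching $M$, and assume $(G,M)\notin\mathscr G$. If every arc of the resolution configuration $D_{\Gamma_M}(\overline 0)$ (all-zero state) is an $m$-arc, then $D_{\Gamma_M}(\overline 0)$ is not consistently orientable.
   Context: A perfect matching graph $\Gamma_M$ is an embedding in $S^2$ of a planar trivalent graph $G$ together with a perfect matching $M$; fix an ordering $M_1,\dots,M_n$ of $M$. Resolution configurations: $D=(Z(D),A(D))$, $Z(D)$ a finite set of circles immersed in $S^2$ (union has only transverse double points), $A(D)$ a finite totally ordered set of disjoint embedded arcs meeting the circles exactly in their endpoints. Surgery $s_A(D)$ along $A$: in a small disk around $A$ meeting the circles in segments with ends $z,w$ and $x,y$ ($z,x$ on one side of $A$, $w,y$ on the other), replace them by strands $z$–$y$ and $x$–$w$ crossing once transversally; arcs become $A(D)\setminus\{A\}$. An arc is an $\eta$-, $\Delta$-, or $m$-arc according as surgery changes the number of circles by $0,+1,-1$. Resolutions: for a matching edge $e=uv$, let $a,b$ be the other edges at $u$ and $c,d$ those at $v$, with $a,c$ on the same side of $e$. The $0$-resolution removes $u,v,e$, joins $a$–$c$ and $b$–$d$ by disjoint strands parallel to $e$, and places an arc joining them; the $1$-resolution joins $a$–$d$ and $b$–$c$ by strands crossing once, no arc. $D_{\Gamma_M}(v)$, $v\in\{0,1\}^n$, takes the $v_i$-resolution at $M_i$, with arcs $A_i$ ($v_i=0$) ordered by $i$. (The circles of $D_{\Gamma_M}(\overline 0)$ are pairwise disjoint embedded circles.) Bad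 face: states $v,u$ differing exactly in coordinates $i\neq j$, $v_i=v_j=0$, $u_i=u_j=1$, such that for some ordering of $\{i,j\}$: $A_i$ is an $\eta$-arc of $D_{\Gamma_M}(v)$, $A_j$ is an $\eta$-arc of $s_{A_i}(D_{\Gamma_M}(v))$, $A_j$ is a $\Delta$-arc of $D_{\Gamma_M}(v)$, and $A_i$ is an $m$-arc of $s_{A_j}(D_{\Gamma_M}(v))$. $\mathscr G$ is the family of pairs $(G,M)$ ($G$ planar trivalent, $M$ a perfect matching) such that for every perfect matching graph representing $(G,M)$ (every plane embedding, every ordering of $M$) the hypercube of states contains no bad face. Consistently orientable: a resolution configuration whose circles are pairwise disjoint embedded circles is consistently orientable if the circles can be oriented so that for every arc $A$, in a small disk around $A$ identified orientation-preservingly with $[0,1]^2$ so that the two circle segments become $\{1/3\}\times[0,1]$ and $\{2/3\}\times[0,1]$ and $A$ becomes $[1/3,2/3]\times\{1/2\}$, both segments are oriented in the same (upward) direction. *)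

theory Defs
  imports Main
begin

text \<open>
A planar trivalent (multi)graph G is given by a finite set H of
darts (half-edges), a fixed-point-free involution alpha on H (the two darts of an edge)
and a vertex map vert (each vertex carries exactly three darts).  A plane embedding
(in S^2) is a rotation system sigma: a permutation of H preserving vert, cyclically
permuting the three darts at each vertex counterclockwise, such that every connected
component has genus 0 (Euler: V - E + F = 2 * number of components, F = orbits of
sigma o alpha).
\<close>

definition num_classes :: "'a set \<Rightarrow> ('a \<times> 'a) set \<Rightarrow> nat" where
  "num_classes A R = card ((\<lambda>x. {y \<in> A. (x, y) \<in> R\<^sup>*}) ` A)"

definition trivalent_graph :: "'d set \<Rightarrow> ('d \<Rightarrow> 'd) \<Rightarrow> ('d \<Rightarrow> 'v) \<Rightarrow> bool" where
  "trivalent_graph H \<alpha> vert \<longleftrightarrow> finite H \<and>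
     (\<forall>x\<in>H. \<alpha> x \<in> H \<and> \<alpha> x \<noteq> x \<and> \<alpha> (\<alpha> x) = x) \<and>
     (\<forall>x\<in>H. card {y \<in> H. vert y = vert x} = 3)"

definition graph_edges :: "'d set \<Rightarrow> ('d \<Rightarrow> 'd) \<Rightarrow> 'd set set" where
  "graph_edges H \<alpha> = (\<lambda>x. {x, \<alpha> x}) ` H"

definition perfect_matching :: "'d set \<Rightarrow> ('d \<Rightarrow> 'd) \<Rightarrow> ('d \<Rightarrow> 'v) \<Rightarrow> 'd set set \<Rightarrow> bool" where
  "perfect_matching H \<alpha> vert M \<longleftrightarrow> M \<subseteq> graph_edges H \<alpha> \<and>
     (\<forall>e\<in>M. \<forall>x\<in>e. vert (\<alpha> x) \<noteq> vert x) \<and>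
     (\<forall>x\<in>H. \<exists>!e. e \<in> M \<and> (\<exists>y\<in>e. vert y = vert x))"

definition plane_embedding :: "'d set \<Rightarrow> ('d \<Rightarrow> 'd) \<Rightarrow> ('d \<Rightarrow> 'v) \<Rightarrow> ('d \<Rightarrow> 'd) \<Rightarrow> bool" where
  "plane_embedding H \<alpha> vert \<sigma> \<longleftrightarrow> bij_betw \<sigma> H H \<and>
     (\<forall>x\<in>H. vert (\<sigma> x) = vert x \<and> \<sigma> x \<noteq> x) \<and>
     card (vert ` H) + num_classes H {(x, \<sigma> (\<alpha> x)) | x. x \<in> H}
       = card (graph_edges H \<alpha>)
         + 2 * num_classes H ({(x, \<alpha> x) | x. x \<in> H} \<union> {(x, \<sigma> x) | x. x \<in> H})"

text \<open>An ordering M_0, ..., M_(n-1) of M (indices shifted to start at 0).\<close>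
definition matching_ordering :: "'d set set \<Rightarrow> (nat \<Rightarrow> 'd set) \<Rightarrow> bool" where
  "matching_ordering M Mo \<longleftrightarrow> bij_betw Mo {..<card M} M"

definition pm_graph :: "'d set \<Rightarrow> ('d \<Rightarrow> 'd) \<Rightarrow> ('d \<Rightarrow> 'v) \<Rightarrow> ('d \<Rightarrow> 'd)
     \<Rightarrow> 'd set set \<Rightarrow> (nat \<Rightarrow> 'd set) \<Rightarrow> bool" where
  "pm_graph H \<alpha> vert \<sigma> M Mo \<longleftrightarrow> trivalent_graph H \<alpha> vert \<and> perfect_matching H \<alpha> vert M
     \<and> plane_embedding H \<alpha> vert \<sigma> \<and> matching_ordering M Mo"

text \<open>States: v :: nat => bool, v i = True meaning the 1-resolution at M_i.
The circles of D(v) are built from strand pieces: the non-matching darts ("nodes")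
are joined along their edges (x -- alpha x) and through the resolution of the matching
edge at their vertex (x -- res x).  For the matching dart h at u (edge e = u v,
other darts a = sigma h, b = sigma^2 h at u and c = sigma^2 (alpha h) , d = sigma (alpha h)
at v, so that a, c lie on the same (left) side of e): the 0-resolution joins a--c and
b--d, the 1-resolution joins a--d and b--c.\<close>

definition mdart :: "'d set set \<Rightarrow> ('d \<Rightarrow> 'v) \<Rightarrow> 'd \<Rightarrow> 'd" where
  "mdart M vert x = (THE h. h \<in> \<Union>M \<and> vert h = vert x)"

definition midx :: "'d set set \<Rightarrow> (nat \<Rightarrow> 'd set) \<Rightarrow> 'd \<Rightarrow> nat" where
  "midx M Mo h = (THE i. i < card M \<and> h \<in> Mo i)"

definition res :: "('d \<Rightarrow> 'd) \<Rightarrow> ('d \<Rightarrow> 'v) \<Rightarrow> ('d \<Rightarrow> 'd) \<Rightarrow> 'd set set \<Rightarrow> (nat \<Rightarrow> 'd set)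
     \<Rightarrow> (nat \<Rightarrow> bool) \<Rightarrow> 'd \<Rightarrow> 'd" where
  "res \<alpha> vert \<sigma> M Mo v x =
     (let h = mdart M vert x; i = midx M Mo h in
      if \<not> v i then (if x = \<sigma> h then \<sigma> (\<sigma> (\<alpha> h)) else \<sigma> (\<alpha> h))
      else (if x = \<sigma> h then \<sigma> (\<alpha> h) else \<sigma> (\<sigma> (\<alpha> h))))"

definition nodes :: "'d set \<Rightarrow> 'd set set \<Rightarrow> 'd set" where
  "nodes H M = H - \<Union>M"

definition ncirc :: "'d set \<Rightarrow> ('d \<Rightarrow> 'd) \<Rightarrow> ('d \<Rightarrow> 'v) \<Rightarrow> ('d \<Rightarrow> 'd) \<Rightarrow> 'd set set
     \<Rightarrow> (nat \<Rightarrow> 'd set) \<Rightarrow> (nat \<Rightarrow> bool) \<Rightarrow> int" where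
  "ncirc H \<alpha> vert \<sigma> M Mo v = int (num_classes (nodes H M)
      ({(x, \<alpha> x) | x. x \<in> nodes H M} \<union> {(x, res \<alpha> vert \<sigma> M Mo v x) | x. x \<in> nodes H M}))"

text \<open>Surgery along the arc A_i of D(v) (v i = False) yields the configuration D(v(i:=True)):
the two strands z--w, x--y are replaced by z--y, x--w, which is the 1-resolution at M_i,
and the arc A_i is removed.\<close>
definition surg :: "(nat \<Rightarrow> bool) \<Rightarrow> nat \<Rightarrow> (nat \<Rightarrow> bool)" where
  "surg v i = v(i := True)"

definition arc_change where
  "arc_change H \<alpha> vert \<sigma> M Mo v i = ncirc H \<alpha> vert \<sigma> M Mo (surg v i) - ncirc H \<alpha> vert \<sigma> M Mo v"

definition eta_arc where "eta_arc H \<alpha> vert \<sigma> M Mo v i \<longleftrightarrow> arc_change H \<alpha> vert \<sigma> M Mo v i = 0"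
definition Delta_arc where "Delta_arc H \<alpha> vert \<sigma> M Mo v i \<longleftrightarrow> arc_change H \<alpha> vert \<sigma> M Mo v i = 1"
definition m_arc where "m_arc H \<alpha> vert \<sigma> M Mo v i \<longleftrightarrow> arc_change H \<alpha> vert \<sigma> M Mo v i = -1"

definition bad_face_cond where
  "bad_face_cond H \<alpha> vert \<sigma> M Mo v i j \<longleftrightarrow>
     eta_arc H \<alpha> vert \<sigma> M Mo v i \<and> eta_arc H \<alpha> vert \<sigma> M Mo (surg v i) j \<and>
     Delta_arc H \<alpha> vert \<sigma> M Mo v j \<and> m_arc H \<alpha> vert \<sigma> M Mo (surg v j) i"

definition has_bad_face where
  "has_bad_face H \<alpha> vert \<sigma> M Mo \<longleftrightarrow>
     (\<exists>v i j. i < card M \<and> j < card M \<and> i \<noteq> j \<and> \<not> v i \<and> \<not> v j \<and>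
        (bad_face_cond H \<alpha> vert \<sigma> M Mo v i j \<or> bad_face_cond H \<alpha> vert \<sigma> M Mo v j i))"

definition in_scrG :: "'d set \<Rightarrow> ('d \<Rightarrow> 'd) \<Rightarrow> ('d \<Rightarrow> 'v) \<Rightarrow> 'd set set \<Rightarrow> bool" where
  "in_scrG H \<alpha> vert M \<longleftrightarrow>
     (\<forall>\<sigma> Mo. plane_embedding H \<alpha> vert \<sigma> \<and> matching_ordering M Mo
        \<longrightarrow> \<not> has_bad_face H \<alpha> vert \<sigma> M Mo)"

text \<open>Consistent orientability of D(0): o x = True means the circle through node x is
traversed from x along its resolution strand to res x (hence arriving at x along the
edge strand from alpha x).  At the arc A_i of the matching edge with dart h at u, the
strands a--c and b--d (a = sigma h, b = sigma^2 h) are oriented from the u-side to the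
v-side iff o a, resp. o b; consistency demands they are oriented the same way.\<close>
definition consistently_orientable_zero where
  "consistently_orientable_zero H \<alpha> vert \<sigma> M Mo \<longleftrightarrow>
     (\<exists>ori :: 'd \<Rightarrow> bool.
        (\<forall>x \<in> nodes H M. ori (\<alpha> x) \<noteq> ori x \<and> ori (res \<alpha> vert \<sigma> M Mo (\<lambda>_. False) x) \<noteq> ori x) \<and>
        (\<forall>i < card M. \<forall>h \<in> Mo i. ori (\<sigma> h) = ori (\<sigma> (\<sigma> h))))"

end

theory Submission
  imports Defs "HOL-Combinatorics.Orbits"
begin

(*
  A consistent orientation of D(0) stays consistent in every state D(v): edge strands and
  resolution strands always join darts of opposite orientation, also for the 1-resolution at a
  matching edge, which joins a to d and b to c where a, b carry one orientation and c, d the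
  other.  Following the orientation therefore turns the circles of D(v) into the cycles of a
  permutation of the darts, and surgery along an arc composes this permutation with a
  transposition.  Since the sign of a permutation of N is (-1)^(card N + number of cycles), the
  number of circles must change: no state has an eta-arc.  Another plane embedding only reverses
  the rotation at some vertices, which relabels the states, and the all-zero resolution does not
  depend on the ordering of M.  So no embedding and no ordering has a bad face, and (G, M) would
  belong to script-G.
*)

section \<open>Sign and number of orbits of a permutation\<close>

lemma permutation_orbit_eq:
  assumes "permutation f" "x \<in> orbit f y"
  shows "orbit f x = orbit f y"
  using orbit_cyclic_eq3[OF cyclic_on_orbit'[OF assms(1)] assms(2)] .

lemma permutation_orbits_disjoint:
  assumes "permutation f" "orbit f x \<noteq> orbit f y"
  shows "orbit f x \<inter> orbit f y = {}"
  using assms permutation_orbit_eq by (metis disjoint_iff)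

context
  fixes p :: "'a \<Rightarrow> 'a" and x :: 'a
  assumes perm: "permutation p"
begin

lemma transpose_comp_apply_eq:
  assumes "z \<noteq> x" "p z \<noteq> x"
  shows "(transpose x (p x) \<circ> p) z = p z"
proof -
  have "p z \<noteq> p x"
    using assms(1) bij_is_inj[OF permutation_bijective[OF perm]] by (auto dest: injD)
  then show ?thesis using assms(2) by simp
qed

lemma orbit_transpose_comp_moved:
  assumes moved: "p x \<noteq> x"
  shows "orbit (transpose x (p x) \<circ> p) (p x) = orbit p x - {x}"
proof
  let ?q = "transpose x (p x) \<circ> p"
  have closed: "?q z \<in> orbit p x - {x}" if "z \<in> orbit p x - {x}" for z
  proof (cases "p z = x")
    case True
    then show ?thesis using moved by (simp add: orbit.base)
  next
    case False
    then show ?thesis using that transpose_comp_apply_eq[of z] by (simp add: orbit.step)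
  qed
  have px: "p x \<in> orbit p x - {x}" using moved by (simp add: orbit.base)
  show "orbit ?q (p x) \<subseteq> orbit p x - {x}"
  proof
    fix z assume "z \<in> orbit ?q (p x)"
    then show "z \<in> orbit p x - {x}" by induct (use closed px in auto)
  qed
  have q_perm: "permutation ?q" using perm by (simp add: permutation_compose permutation_swap_id)
  show "orbit p x - {x} \<subseteq> orbit ?q (p x)"
  proof
    fix z assume "z \<in> orbit p x - {x}"
    then have "z \<in> orbit p x" "z \<noteq> x" by auto
    then show "z \<in> orbit ?q (p x)"
    proof induct
      case base
      show ?case by (rule permutation_self_in_orbit[OF q_perm])
    next
      case (step y)
      show ?case
      proof (cases "y = x")
        case True
        then show ?thesis using permutation_self_in_orbit[OF q_perm] by metis
      next
        case False
        then have "?q y = p y" using step(3) by (intro transpose_comp_apply_eq)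
        then show ?thesis using step(2) False orbit.step[of y ?q "p x"] by metis
      qed
    qed
  qed
qed

lemma orbit_transpose_comp_other:
  assumes "y \<notin> orbit p x"
  shows "orbit (transpose x (p x) \<circ> p) y = orbit p y"
proof (rule orbit_cong[OF permutation_self_in_orbit[OF perm]])
  fix s assume s: "s \<in> orbit p y"
  have "x \<notin> orbit p y"
    using assms orbit_swap[OF permutation_self_in_orbit[OF perm]] by blast
  moreover have "p s \<in> orbit p y" using s by (rule orbit.step)
  ultimately show "(transpose x (p x) \<circ> p) s = p s"
    using s by (intro transpose_comp_apply_eq) auto
qed

lemma transpose_comp_support_psubset:
  assumes moved: "p x \<noteq> x"
  shows "{y. (transpose x (p x) \<circ> p) y \<noteq> y} \<subset> {y. p y \<noteq> y}"
proof
  have "(transpose x (p x) \<circ> p) y = y" if "p y = y" for y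
    using that moved transpose_comp_apply_eq[of y] by metis
  then show "{y. (transpose x (p x) \<circ> p) y \<noteq> y} \<subseteq> {y. p y \<noteq> y}" by blast
  have "(transpose x (p x) \<circ> p) x = x" by simp
  then show "{y. (transpose x (p x) \<circ> p) y \<noteq> y} \<noteq> {y. p y \<noteq> y}" using moved by blast
qed

end

lemma card_orbits_transpose_comp:
  assumes perm: "p permutes N" and fin: "finite N" and x: "x \<in> N" and moved: "p x \<noteq> x"
  shows "card ((\<lambda>y. orbit (transpose x (p x) \<circ> p) y) ` N) = Suc (card ((\<lambda>y. orbit p y) ` N))"
proof -
  let ?q = "transpose x (p x) \<circ> p" and ?O = "orbit p x"
  have pp: "permutation p" using fin perm by (rule permutes_imp_permutation)
  have qp: "permutation ?q" using pp by (simp add: permutation_compose permutation_swap_id)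
  have x_in: "x \<in> ?O" using permutation_self_in_orbit[OF pp] .
  have px_in: "p x \<in> ?O - {x}" using moved by (simp add: orbit.base)
  have "orbit ?q x = {x}" by (simp add: orbit_eq_singleton_iff)
  moreover have "orbit ?q y = ?O - {x}" if "y \<in> ?O - {x}" for y
    using orbit_transpose_comp_moved[OF pp moved] that permutation_orbit_eq[OF qp, of y "p x"]
    by simp
  ultimately have q_in: "(\<lambda>y. orbit ?q y) ` ?O = {{x}, ?O - {x}}"
    using x_in px_in by blast
  have p_in: "(\<lambda>y. orbit p y) ` ?O = {?O}"
    using permutation_orbit_eq[OF pp] x_in by blast
  define R where "R = (\<lambda>y. orbit p y) ` (N - ?O)"
  have q_out: "(\<lambda>y. orbit ?q y) ` (N - ?O) = R"
    unfolding R_def using orbit_transpose_comp_other[OF pp] by simp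
  have N_split: "N = ?O \<union> (N - ?O)" using permutes_orbit_subset[OF perm x] by blast
  have q_img: "(\<lambda>y. orbit ?q y) ` N = {{x}, ?O - {x}} \<union> R"
    by (subst N_split) (simp only: image_Un q_in q_out)
  have p_img: "(\<lambda>y. orbit p y) ` N = {?O} \<union> R"
    by (subst N_split) (simp only: image_Un p_in R_def)
  have disj: "S \<inter> ?O = {}" if S: "S \<in> R" for S
  proof -
    obtain y where y: "y \<in> N - ?O" "S = orbit p y" using S R_def by blast
    then have "orbit p y \<noteq> ?O" using permutation_self_in_orbit[OF pp, of y] by blast
    then show ?thesis using y(2) permutation_orbits_disjoint[OF pp] by simp
  qed
  have "{x} \<notin> R" using disj[of "{x}"] x_in by auto
  moreover have "?O - {x} \<notin> R" using disj[of "?O - {x}"] px_in by auto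
  moreover have "?O \<notin> R" using disj[of ?O] x_in by auto
  moreover have "finite R" using fin R_def by simp
  moreover have "{x} \<noteq> ?O - {x}" by blast
  ultimately show ?thesis unfolding q_img p_img by simp
qed

lemma evenperm_iff_card_orbits:
  assumes fin: "finite N" and perm: "p permutes N"
  shows "evenperm p \<longleftrightarrow> even (card N + card ((\<lambda>y. orbit p y) ` N))"
  using perm
proof (induction "card {y. p y \<noteq> y}" arbitrary: p rule: less_induct)
  case less
  show ?case
  proof (cases "p = id")
    case True
    have "(\<lambda>y. orbit id y) ` N = (\<lambda>y. {y}) ` N"
      by (intro image_cong) (simp_all add: orbit_eq_singleton_iff)
    then show ?thesis using True by (simp add: card_image)
  next
    case False
    then obtain x where moved: "p x \<noteq> x" by (auto simp: fun_eq_iff)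
    then have x: "x \<in> N" using permutes_not_in[OF less.prems] by blast
    have pp: "permutation p" using fin less.prems by (rule permutes_imp_permutation)
    define q where "q = transpose x (p x) \<circ> p"
    have q_perm: "q permutes N"
      unfolding q_def
      by (rule permutes_compose[OF less.prems permutes_swap_id[OF x]])
        (simp add: permutes_in_image[OF less.prems] x)
    have "finite {y. p y \<noteq> y}"
      by (rule finite_subset[OF _ fin]) (use permutes_not_in[OF less.prems] in auto)
    then have "card {y. q y \<noteq> y} < card {y. p y \<noteq> y}"
      unfolding q_def using transpose_comp_support_psubset[OF pp moved] by (rule psubset_card_mono)
    then have IH: "evenperm q \<longleftrightarrow> even (card N + card ((\<lambda>y. orbit q y) ` N))"
      using less.hyps q_perm by blast
    have "evenperm q \<longleftrightarrow> \<not> evenperm p"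
      unfolding q_def using moved by (simp add: evenperm_comp[OF permutation_swap_id pp] evenperm_swap)
    moreover have "card ((\<lambda>y. orbit q y) ` N) = Suc (card ((\<lambda>y. orbit p y) ` N))"
      unfolding q_def using less.prems fin x moved by (rule card_orbits_transpose_comp)
    then have "even (card N + card ((\<lambda>y. orbit q y) ` N))
        \<longleftrightarrow> \<not> even (card N + card ((\<lambda>y. orbit p y) ` N))"
      by simp
    ultimately show ?thesis using IH by argo
  qed
qed

lemma card_orbits_comp_transpose_ne:
  assumes fin: "finite N" and perm: "p permutes N" and "a \<in> N" "b \<in> N" "a \<noteq> b"
  shows "card ((\<lambda>y. orbit (p \<circ> transpose a b) y) ` N) \<noteq> card ((\<lambda>y. orbit p y) ` N)"
proof
  have "p \<circ> transpose a b permutes N"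
    using assms by (simp add: permutes_compose permutes_swap_id)
  moreover have "evenperm (p \<circ> transpose a b) \<longleftrightarrow> \<not> evenperm p"
    using assms permutes_imp_permutation[OF fin perm]
    by (simp add: evenperm_comp[OF _ permutation_swap_id] evenperm_swap)
  moreover assume "card ((\<lambda>y. orbit (p \<circ> transpose a b) y) ` N) = card ((\<lambda>y. orbit p y) ` N)"
  ultimately show False using evenperm_iff_card_orbits[OF fin] perm by metis
qed

section \<open>Cycles of two alternating involutions\<close>

definition alternating_perm :: "'a set \<Rightarrow> ('a \<Rightarrow> bool) \<Rightarrow> ('a \<Rightarrow> 'a) \<Rightarrow> ('a \<Rightarrow> 'a) \<Rightarrow> 'a \<Rightarrow> 'a"
  where "alternating_perm N ori s t x = (if x \<in> N then if ori x then s x else t x else x)"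

lemma alternating_perm_swap:
  assumes "ori a" "ori b" "s' a = s b" "s' b = s a"
    and "\<And>x. x \<in> N \<Longrightarrow> ori x \<Longrightarrow> x \<noteq> a \<Longrightarrow> x \<noteq> b \<Longrightarrow> s' x = s x"
    and "a \<in> N" "b \<in> N"
  shows "alternating_perm N ori s' t = alternating_perm N ori s t \<circ> transpose a b"
  using assms by (auto simp: alternating_perm_def fun_eq_iff transpose_def)

locale alternating_involutions =
  fixes N :: "'a set" and ori :: "'a \<Rightarrow> bool" and s t :: "'a \<Rightarrow> 'a"
  assumes s_in: "x \<in> N \<Longrightarrow> s x \<in> N" and s_s: "x \<in> N \<Longrightarrow> s (s x) = x"
    and s_flip: "x \<in> N \<Longrightarrow> ori (s x) \<noteq> ori x"
    and t_in: "x \<in> N \<Longrightarrow> t x \<in> N" and t_t: "x \<in> N \<Longrightarrow> t (t x) = x"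
    and t_flip: "x \<in> N \<Longrightarrow> ori (t x) \<noteq> ori x"
begin

lemma ori_s: "x \<in> N \<Longrightarrow> ori (s x) \<longleftrightarrow> \<not> ori x" and ori_t: "x \<in> N \<Longrightarrow> ori (t x) \<longleftrightarrow> \<not> ori x"
  using s_flip t_flip by blast+

lemma alternating_perm_permutes: "alternating_perm N ori s t permutes N"
proof (rule bij_imp_permutes)
  let ?p = "alternating_perm N ori s t" and ?p' = "alternating_perm N (\<lambda>x. \<not> ori x) s t"
  have "?p x \<in> N \<and> ?p' (?p x) = x \<and> ?p' x \<in> N \<and> ?p (?p' x) = x" if "x \<in> N" for x
    using that by (cases "ori x") (simp_all add: alternating_perm_def s_in s_s ori_s t_in t_t ori_t)
  then show "bij_betw ?p N N"
    by (intro bij_betw_byWitness[where f' = ?p']) auto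
qed (simp add: alternating_perm_def)

lemma permutation_alternating_perm:
  assumes "finite N" shows "permutation (alternating_perm N ori s t)"
  using assms alternating_perm_permutes by (rule permutes_imp_permutation)

lemma orbit_alternating_perm:
  assumes fin: "finite N" and x: "x \<in> N"
  shows "orbit (alternating_perm N ori s t) x
    = {y \<in> N. (x, y) \<in> ({(z, t z) |z. z \<in> N} \<union> {(z, s z) |z. z \<in> N})\<^sup>*}"
    (is "orbit ?p x = {y \<in> N. (x, y) \<in> ?R\<^sup>*}")
proof
  have pp: "permutation ?p" using fin by (rule permutation_alternating_perm)
  have p_in: "?p y \<in> N" and p_edge: "(y, ?p y) \<in> ?R" if "y \<in> N" for y
    using that by (auto simp: alternating_perm_def s_in t_in)
  show "orbit ?p x \<subseteq> {y \<in> N. (x, y) \<in> ?R\<^sup>*}"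
  proof
    fix y assume "y \<in> orbit ?p x"
    then show "y \<in> {y \<in> N. (x, y) \<in> ?R\<^sup>*}"
    proof induct
      case base
      show ?case using p_in[OF x] p_edge[OF x] by blast
    next
      case (step y)
      then show ?case using p_in p_edge by (blast intro: rtrancl_into_rtrancl)
    qed
  qed
  show "{y \<in> N. (x, y) \<in> ?R\<^sup>*} \<subseteq> orbit ?p x"
  proof
    fix y assume "y \<in> {y \<in> N. (x, y) \<in> ?R\<^sup>*}"
    then have "(x, y) \<in> ?R\<^sup>*" by simp
    then show "y \<in> orbit ?p x"
    proof induct
      case base
      show ?case using permutation_self_in_orbit[OF pp] .
    next
      case (step y z)
      from step.hyps(2) consider "?p y = z" | "?p z = y"
        by (cases "ori y") (auto simp: alternating_perm_def s_in s_s ori_s t_in t_t ori_t)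
      then show ?case
      proof cases
        case 1
        then show ?thesis using step.hyps(3) by (blast intro: orbit.step)
      next
        case 2
        then have "z \<in> orbit ?p y"
          using orbit_swap[OF permutation_self_in_orbit[OF pp]] orbit.base by metis
        then show ?thesis using step.hyps(3) by (rule orbit_trans)
      qed
    qed
  qed
qed

lemma num_classes_eq_card_orbits:
  assumes "finite N"
  shows "num_classes N ({(z, t z) |z. z \<in> N} \<union> {(z, s z) |z. z \<in> N})
    = card ((\<lambda>x. orbit (alternating_perm N ori s t) x) ` N)"
  unfolding num_classes_def using orbit_alternating_perm[OF assms] by (simp cong: image_cong)

end

section \<open>Resolutions of a perfect matching graph\<close>

definition vertex_rotation :: "'d set \<Rightarrow> ('d \<Rightarrow> 'v) \<Rightarrow> ('d \<Rightarrow> 'd) \<Rightarrow> bool" where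
  "vertex_rotation H vert \<sigma> \<longleftrightarrow> bij_betw \<sigma> H H \<and> (\<forall>x\<in>H. vert (\<sigma> x) = vert x \<and> \<sigma> x \<noteq> x)"

lemma plane_embedding_imp_vertex_rotation:
  "plane_embedding H \<alpha> vert \<sigma> \<Longrightarrow> vertex_rotation H vert \<sigma>"
  by (simp add: plane_embedding_def vertex_rotation_def)

lemma vertex_rotation_darts:
  assumes tri: "trivalent_graph H \<alpha> vert" and rot: "vertex_rotation H vert s" and h: "h \<in> H"
  shows "{y \<in> H. vert y = vert h} = {h, s h, s (s h)} \<and> s h \<noteq> h \<and> s (s h) \<noteq> s h \<and> s (s h) \<noteq> h"
proof -
  let ?C = "{y \<in> H. vert y = vert h}"
  have card_C: "card ?C = 3" and fin_C: "finite ?C"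
    using tri h by (simp_all add: trivalent_graph_def)
  have inj: "inj_on s H" and s_in: "\<And>y. y \<in> H \<Longrightarrow> s y \<in> H"
    and s_vert: "\<And>y. y \<in> H \<Longrightarrow> vert (s y) = vert y" and s_moves: "\<And>y. y \<in> H \<Longrightarrow> s y \<noteq> y"
    using rot by (auto simp: vertex_rotation_def bij_betw_def)
  have in_C: "y \<in> ?C \<Longrightarrow> s y \<in> ?C" for y using s_in s_vert by simp
  have h_C: "h \<in> ?C" "s h \<in> ?C" "s (s h) \<in> ?C" using h in_C by simp_all
  have ne1: "s h \<noteq> h" and ne2: "s (s h) \<noteq> s h" using h_C s_moves by auto
  have ne3: "s (s h) \<noteq> h"
  proof
    assume period2: "s (s h) = h"
    have "\<not> ?C \<subseteq> {h, s h}"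
    proof
      assume "?C \<subseteq> {h, s h}"
      then have "card ?C \<le> card {h, s h}" by (intro card_mono) simp_all
      then show False using card_C ne1 by simp
    qed
    then obtain z where z: "z \<in> ?C" "z \<noteq> h" "z \<noteq> s h" by blast
    have "s z \<noteq> h" using inj_onD[OF inj, of z "s h"] period2 z h_C by auto
    moreover have "s z \<noteq> s h" using inj_onD[OF inj, of z h] z h_C by auto
    moreover have "s z \<noteq> z" using z s_moves by simp
    moreover have "?C = {h, s h, z}"
      using z h_C ne1 card_C fin_C by (intro card_subset_eq[symmetric]) auto
    ultimately show False using in_C[OF z(1)] by blast
  qed
  have "?C = {h, s h, s (s h)}"
    using h_C ne1 ne2 ne3 card_C fin_C by (intro card_subset_eq[symmetric]) auto
  then show ?thesis using ne1 ne2 ne3 by blast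
qed

lemma vertex_rotation_cases:
  assumes tri: "trivalent_graph H \<alpha> vert" and rot: "vertex_rotation H vert \<sigma>"
    and rot': "vertex_rotation H vert \<sigma>'" and h: "h \<in> H"
  shows "(\<sigma>' h = \<sigma> h \<and> \<sigma>' (\<sigma>' h) = \<sigma> (\<sigma> h)) \<or> (\<sigma>' h = \<sigma> (\<sigma> h) \<and> \<sigma>' (\<sigma>' h) = \<sigma> h)"
proof -
  have "{h, \<sigma> h, \<sigma> (\<sigma> h)} = {h, \<sigma>' h, \<sigma>' (\<sigma>' h)}"
    using vertex_rotation_darts[OF tri rot h] vertex_rotation_darts[OF tri rot' h] by simp
  moreover have "\<sigma>' h \<noteq> h" "\<sigma>' (\<sigma>' h) \<noteq> h" "\<sigma>' (\<sigma>' h) \<noteq> \<sigma>' h" "\<sigma> (\<sigma> h) \<noteq> \<sigma> h"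
    using vertex_rotation_darts[OF tri rot' h] vertex_rotation_darts[OF tri rot h] by simp_all
  ultimately have "\<sigma>' h \<in> {\<sigma> h, \<sigma> (\<sigma> h)}" "\<sigma>' (\<sigma>' h) \<in> {\<sigma> h, \<sigma> (\<sigma> h)}"
    and "\<sigma>' (\<sigma>' h) \<noteq> \<sigma>' h" "\<sigma> (\<sigma> h) \<noteq> \<sigma> h"
    by blast+
  then show ?thesis by auto
qed

lemma res_eq:
  "res \<alpha> vert s M Mo u x =
    (let h = mdart M vert x in
     if (x = s h) = (\<not> u (midx M Mo h)) then s (s (\<alpha> h)) else s (\<alpha> h))"
  by (simp add: res_def Let_def)

(* A second rotation reverses the first at some vertices; a matching edge whose two ends are
   reversed differently has its 0- and 1-resolutions interchanged. *)
definition state_shift :: "('d \<Rightarrow> 'd) \<Rightarrow> ('d \<Rightarrow> 'd) \<Rightarrow> ('d \<Rightarrow> 'd) \<Rightarrow> (nat \<Rightarrow> 'd set) \<Rightarrow> nat \<Rightarrow> bool"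
  where "state_shift \<alpha> \<sigma> \<sigma>' Mo k =
    (let h = SOME h. h \<in> Mo k in (\<sigma>' h = \<sigma> h) \<noteq> (\<sigma>' (\<alpha> h) = \<sigma> (\<alpha> h)))"

locale matched_rotation_system =
  fixes H :: "'d set" and \<alpha> \<sigma> :: "'d \<Rightarrow> 'd" and vert :: "'d \<Rightarrow> 'v"
    and M :: "'d set set" and Mo :: "nat \<Rightarrow> 'd set"
  assumes trivalent: "trivalent_graph H \<alpha> vert"
    and matching: "perfect_matching H \<alpha> vert M"
    and rotation: "vertex_rotation H vert \<sigma>"
    and ordering: "matching_ordering M Mo"
begin

abbreviation "N \<equiv> nodes H M"
abbreviation "md \<equiv> mdart M vert"
abbreviation "mi \<equiv> midx M Mo"

lemma finite_nodes: "finite N"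
  using trivalent by (simp add: trivalent_graph_def nodes_def)

lemma alpha_dart: "x \<in> H \<Longrightarrow> \<alpha> x \<in> H \<and> \<alpha> x \<noteq> x \<and> \<alpha> (\<alpha> x) = x"
  using trivalent by (simp add: trivalent_graph_def)

lemma matching_edge:
  assumes "e \<in> M" "h \<in> e"
  shows "h \<in> H \<and> e = {h, \<alpha> h}"
proof -
  obtain y where y: "y \<in> H" "e = {y, \<alpha> y}"
    using matching assms(1) by (auto simp: perfect_matching_def graph_edges_def)
  then show ?thesis using assms(2) alpha_dart[OF y(1)] by auto
qed

lemma matching_dart: "h \<in> \<Union>M \<Longrightarrow> h \<in> H"
  using matching_edge by blast

lemma matching_dart_alpha: "h \<in> \<Union>M \<Longrightarrow> \<alpha> h \<in> \<Union>M"
  using matching_edge by blast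

lemma matching_dart_unique:
  assumes "h \<in> \<Union>M" "h' \<in> \<Union>M" "vert h = vert h'"
  shows "h = h'"
proof -
  obtain e e' where e: "e \<in> M" "h \<in> e" "e' \<in> M" "h' \<in> e'" using assms by blast
  have "h \<in> H" using e by (blast intro: matching_dart)
  then have "\<exists>!e. e \<in> M \<and> (\<exists>y\<in>e. vert y = vert h)"
    using matching by (simp add: perfect_matching_def)
  then have uniq: "e1 = e2" if "e1 \<in> M" "\<exists>y\<in>e1. vert y = vert h"
    "e2 \<in> M" "\<exists>y\<in>e2. vert y = vert h" for e1 e2
    using that by blast
  have "e' = e" by (rule uniq) (use e assms(3) in auto)
  then have "h' \<in> {h, \<alpha> h}" using e matching_edge by blast
  moreover have "vert (\<alpha> h) \<noteq> vert h"
    using matching e by (simp add: perfect_matching_def)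
  ultimately show ?thesis using assms(3) by auto
qed

lemma mdart_spec: assumes "x \<in> H" shows "md x \<in> \<Union>M \<and> vert (md x) = vert x"
proof -
  obtain e y where "e \<in> M" "y \<in> e" "vert y = vert x"
    using matching assms by (auto simp: perfect_matching_def)
  then have "\<exists>!h. h \<in> \<Union>M \<and> vert h = vert x"
    by (intro ex1I[of _ y]) (auto intro: matching_dart_unique)
  then show ?thesis unfolding mdart_def by (rule theI')
qed

lemma mdart_eqI: "x \<in> H \<Longrightarrow> h \<in> \<Union>M \<Longrightarrow> vert h = vert x \<Longrightarrow> md x = h"
  using mdart_spec[of x] matching_dart_unique[of h "md x"] by simp

lemma mdart_node: "x \<in> N \<Longrightarrow> md x \<in> \<Union>M"
  using mdart_spec by (simp add: nodes_def)

lemma ordered_edge: "i < card M \<Longrightarrow> Mo i \<in> M"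
  using ordering by (auto simp: matching_ordering_def bij_betw_def)

lemma ordered_edge_dart:
  assumes "i < card M" obtains h where "h \<in> \<Union>M" "Mo i = {h, \<alpha> h}"
proof -
  obtain y where "Mo i = {y, \<alpha> y}"
    using matching ordered_edge[OF assms] by (auto simp: perfect_matching_def graph_edges_def)
  then show ?thesis using that ordered_edge[OF assms] by blast
qed

lemma ordered_edge_unique:
  assumes "i < card M" "j < card M" "h \<in> Mo i" "h \<in> Mo j"
  shows "i = j"
proof -
  have "Mo i = {h, \<alpha> h}" "Mo j = {h, \<alpha> h}"
    using matching_edge[OF ordered_edge] assms by blast+
  moreover have "inj_on Mo {..<card M}"
    using ordering by (simp add: matching_ordering_def bij_betw_def)
  ultimately show ?thesis using assms(1,2) by (simp add: inj_on_def)
qed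

lemma midx_spec: assumes "h \<in> \<Union>M" shows "mi h < card M \<and> h \<in> Mo (mi h)"
proof -
  have "M = Mo ` {..<card M}" using ordering by (simp add: matching_ordering_def bij_betw_def)
  then obtain i where "i < card M" "h \<in> Mo i" using assms by auto
  then have "\<exists>!i. i < card M \<and> h \<in> Mo i" using ordered_edge_unique by blast
  then show ?thesis unfolding midx_def by (rule theI')
qed

lemma midx_eqI: "i < card M \<Longrightarrow> h \<in> Mo i \<Longrightarrow> mi h = i"
  using midx_spec[of h] ordered_edge_unique[of i "mi h" h] ordered_edge by blast

lemma midx_alpha: "h \<in> \<Union>M \<Longrightarrow> mi (\<alpha> h) = mi h"
  using midx_spec[of h] matching_edge[OF ordered_edge] by (blast intro: midx_eqI)

lemma rotation_darts:
  "h \<in> H \<Longrightarrow> {y \<in> H. vert y = vert h} = {h, \<sigma> h, \<sigma> (\<sigma> h)}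
    \<and> \<sigma> h \<noteq> h \<and> \<sigma> (\<sigma> h) \<noteq> \<sigma> h \<and> \<sigma> (\<sigma> h) \<noteq> h"
  using trivalent rotation by (rule vertex_rotation_darts)

lemma node_cases: assumes "x \<in> N" shows "x = \<sigma> (md x) \<or> x = \<sigma> (\<sigma> (md x))"
proof -
  have x: "x \<in> H" "x \<notin> \<Union>M" using assms by (auto simp: nodes_def)
  have "x \<in> {y \<in> H. vert y = vert (md x)}" and "md x \<in> H"
    using mdart_spec[OF x(1)] matching_dart x(1) by auto
  then have "x \<in> {md x, \<sigma> (md x), \<sigma> (\<sigma> (md x))}" using rotation_darts by blast
  moreover have "x \<noteq> md x" using x mdart_spec[OF x(1)] by auto
  ultimately show ?thesis by blast
qed

lemma sigma_nodes:
  assumes h: "h \<in> \<Union>M"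
  shows "\<sigma> h \<in> N \<and> \<sigma> (\<sigma> h) \<in> N \<and> md (\<sigma> h) = h \<and> md (\<sigma> (\<sigma> h)) = h"
proof -
  have "h \<in> H" using h by (rule matching_dart)
  then have H: "\<sigma> h \<in> H" "\<sigma> (\<sigma> h) \<in> H" and v: "vert (\<sigma> h) = vert h" "vert (\<sigma> (\<sigma> h)) = vert h"
    and ne: "\<sigma> h \<noteq> h" "\<sigma> (\<sigma> h) \<noteq> h"
    using rotation_darts[of h] by auto
  have "\<sigma> h \<notin> \<Union>M" "\<sigma> (\<sigma> h) \<notin> \<Union>M"
    using matching_dart_unique[OF _ h] v ne by metis+
  then show ?thesis using H v h by (simp add: nodes_def mdart_eqI)
qed

lemma alpha_node: assumes "x \<in> N" shows "\<alpha> x \<in> N \<and> \<alpha> (\<alpha> x) = x"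
proof -
  have x: "x \<in> H" "x \<notin> \<Union>M" using assms by (auto simp: nodes_def)
  then have "\<alpha> x \<notin> \<Union>M" using matching_dart_alpha alpha_dart by metis
  then show ?thesis using alpha_dart x by (simp add: nodes_def)
qed

abbreviation "resol u \<equiv> res \<alpha> vert \<sigma> M Mo u"

lemma res_sigma:
  assumes h: "h \<in> \<Union>M"
  shows "resol u (\<sigma> h) = (if u (mi h) then \<sigma> (\<alpha> h) else \<sigma> (\<sigma> (\<alpha> h)))"
    and "resol u (\<sigma> (\<sigma> h)) = (if u (mi h) then \<sigma> (\<sigma> (\<alpha> h)) else \<sigma> (\<alpha> h))"
proof -
  have "\<sigma> (\<sigma> h) \<noteq> \<sigma> h" using rotation_darts[OF matching_dart[OF h]] by simp
  then show "resol u (\<sigma> h) = (if u (mi h) then \<sigma> (\<alpha> h) else \<sigma> (\<sigma> (\<alpha> h)))"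
    and "resol u (\<sigma> (\<sigma> h)) = (if u (mi h) then \<sigma> (\<sigma> (\<alpha> h)) else \<sigma> (\<alpha> h))"
    using sigma_nodes[OF h] by (simp_all add: res_def Let_def)
qed

lemma res_node:
  assumes x: "x \<in> N"
  shows "resol u x \<in> N \<and> resol u (resol u x) = x"
proof -
  define h where "h = md x"
  have h: "h \<in> \<Union>M" using mdart_node[OF x] h_def by simp
  have h': "\<alpha> h \<in> \<Union>M" and "\<alpha> (\<alpha> h) = h" and "mi (\<alpha> h) = mi h"
    using matching_dart_alpha h alpha_dart matching_dart midx_alpha by blast+
  then show ?thesis
    using node_cases[OF x] sigma_nodes[OF h'] res_sigma[OF h] res_sigma[OF h'] h_def
    by (cases "u (mi h)") auto
qed

lemma res_fun_upd_other: "mi (md x) \<noteq> i \<Longrightarrow> resol (u(i := b)) x = resol u x"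
  by (simp add: res_def Let_def)

lemma state_shift_midx:
  assumes h: "h \<in> \<Union>M"
  shows "state_shift \<alpha> \<sigma> \<sigma>' Mo (mi h) \<longleftrightarrow> (\<sigma>' h = \<sigma> h) \<noteq> (\<sigma>' (\<alpha> h) = \<sigma> (\<alpha> h))"
proof -
  have "Mo (mi h) = {h, \<alpha> h}" using midx_spec[OF h] matching_edge[OF ordered_edge] by blast
  then have "(SOME h'. h' \<in> Mo (mi h)) \<in> {h, \<alpha> h}" by (metis insertI1 someI)
  then show ?thesis using alpha_dart[OF matching_dart[OF h]] by (auto simp: state_shift_def)
qed

lemma res_rotation_change:
  assumes rot': "vertex_rotation H vert \<sigma>'" and x: "x \<in> N"
  shows "res \<alpha> vert \<sigma>' M Mo v x = resol (\<lambda>k. v k \<noteq> state_shift \<alpha> \<sigma> \<sigma>' Mo k) x"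
proof -
  define h where "h = md x"
  have h: "h \<in> \<Union>M" using mdart_node[OF x] h_def by simp
  have hH: "h \<in> H" "\<alpha> h \<in> H" using matching_dart h matching_dart_alpha by blast+
  have ne: "\<sigma> (\<sigma> h) \<noteq> \<sigma> h" "\<sigma> (\<sigma> (\<alpha> h)) \<noteq> \<sigma> (\<alpha> h)"
    using rotation_darts[OF hH(1)] rotation_darts[OF hH(2)] by auto
  have lhs: "res \<alpha> vert \<sigma>' M Mo v x =
      (if (x = \<sigma>' h) = (\<not> v (mi h)) then \<sigma>' (\<sigma>' (\<alpha> h)) else \<sigma>' (\<alpha> h))"
    unfolding res_eq Let_def h_def ..
  have rhs: "resol (\<lambda>k. v k \<noteq> state_shift \<alpha> \<sigma> \<sigma>' Mo k) x =
      (if (x = \<sigma> h) = (\<not> (v (mi h) \<noteq> state_shift \<alpha> \<sigma> \<sigma>' Mo (mi h)))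
       then \<sigma> (\<sigma> (\<alpha> h)) else \<sigma> (\<alpha> h))"
    unfolding res_eq Let_def h_def ..
  show ?thesis
    unfolding lhs rhs state_shift_midx[OF h]
    using node_cases[OF x, folded h_def] ne
      vertex_rotation_cases[OF trivalent rotation rot' hH(1)]
      vertex_rotation_cases[OF trivalent rotation rot' hH(2)]
    by (elim disjE conjE) auto
qed

lemma ncirc_rotation_change:
  assumes "vertex_rotation H vert \<sigma>'"
  shows "ncirc H \<alpha> vert \<sigma>' M Mo v = ncirc H \<alpha> vert \<sigma> M Mo (\<lambda>k. v k \<noteq> state_shift \<alpha> \<sigma> \<sigma>' Mo k)"
proof -
  have "{(x, res \<alpha> vert \<sigma>' M Mo v x) |x. x \<in> N}
      = {(x, resol (\<lambda>k. v k \<noteq> state_shift \<alpha> \<sigma> \<sigma>' Mo k) x) |x. x \<in> N}"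
    by (rule Collect_cong) (use res_rotation_change[OF assms] in auto)
  then show ?thesis by (simp add: ncirc_def)
qed

end

section \<open>Consistent orientations\<close>

locale consistent_orientation = matched_rotation_system +
  fixes ori :: "_ \<Rightarrow> bool"
  assumes ori_alpha: "x \<in> N \<Longrightarrow> ori (\<alpha> x) \<noteq> ori x"
    and ori_res_zero: "x \<in> N \<Longrightarrow> ori (resol (\<lambda>_. False) x) \<noteq> ori x"
    and ori_vertex: "h \<in> \<Union>M \<Longrightarrow> ori (\<sigma> h) = ori (\<sigma> (\<sigma> h))"
begin

lemma ori_sigma_alpha: "h \<in> \<Union>M \<Longrightarrow> ori (\<sigma> (\<alpha> h)) \<longleftrightarrow> \<not> ori (\<sigma> h)"
  using ori_res_zero[of "\<sigma> h"] sigma_nodes[of h] res_sigma(1)[of h "\<lambda>_. False"]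
    ori_vertex[of "\<alpha> h"] matching_dart_alpha[of h]
  by auto

(* At a matching edge, ori a = ori b and ori c = ori d differ, so the 1-resolution strands
   a--d and b--c join opposite orientations just like the 0-resolution strands a--c and b--d. *)
lemma ori_res: assumes x: "x \<in> N" shows "ori (resol u x) \<noteq> ori x"
proof -
  define h where "h = md x"
  have h: "h \<in> \<Union>M" using mdart_node[OF x] h_def by simp
  show ?thesis
    using node_cases[OF x] res_sigma[OF h, of u] ori_vertex[OF h]
      ori_vertex[OF matching_dart_alpha[OF h]] ori_sigma_alpha[OF h] h_def
    by (cases "u (mi h)") auto
qed

lemma alternating_involutions_res: "alternating_involutions N ori (resol u) \<alpha>"
  by unfold_locales (simp_all add: res_node ori_res alpha_node ori_alpha)

abbreviation "circle_perm u \<equiv> alternating_perm N ori (resol u) \<alpha>"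

lemma ncirc_eq_card_orbits:
  "ncirc H \<alpha> vert \<sigma> M Mo u = int (card ((\<lambda>x. orbit (circle_perm u) x) ` N))"
  using alternating_involutions.num_classes_eq_card_orbits[OF alternating_involutions_res finite_nodes]
  by (simp add: ncirc_def)

lemma oriented_dart:
  assumes "i < card M" obtains h where "h \<in> \<Union>M" "h \<in> Mo i" "ori (\<sigma> h)"
proof -
  obtain h where h: "h \<in> \<Union>M" "Mo i = {h, \<alpha> h}" using ordered_edge_dart[OF assms] .
  show ?thesis
  proof (cases "ori (\<sigma> h)")
    case True
    then show ?thesis using that h by blast
  next
    case False
    then have "ori (\<sigma> (\<alpha> h))" using ori_sigma_alpha[OF h(1)] by simp
    then show ?thesis using that[of "\<alpha> h"] h matching_dart_alpha by blast
  qed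
qed

lemma circle_perm_fun_upd:
  assumes i: "i < card M"
  obtains a b where "a \<in> N" "b \<in> N" "a \<noteq> b"
    "circle_perm (u(i := True)) = circle_perm (u(i := False)) \<circ> transpose a b"
proof -
  obtain h where h: "h \<in> \<Union>M" "h \<in> Mo i" "ori (\<sigma> h)" using oriented_dart[OF i] .
  have mi_h: "mi h = i" using midx_eqI[OF i h(2)] .
  have edge: "Mo i = {h, \<alpha> h}" using matching_edge[OF ordered_edge[OF i] h(2)] by blast
  have nodes: "\<sigma> h \<in> N" "\<sigma> (\<sigma> h) \<in> N" using sigma_nodes[OF h(1)] by auto
  have other: "resol (u(i := True)) x = resol (u(i := False)) x"
    if x: "x \<in> N" "ori x" "x \<noteq> \<sigma> h" "x \<noteq> \<sigma> (\<sigma> h)" for x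
  proof -
    have "md x \<noteq> h" using node_cases[OF x(1)] x(3,4) by auto
    moreover have "md x \<noteq> \<alpha> h"
    proof
      assume "md x = \<alpha> h"
      then have "x = \<sigma> (\<alpha> h) \<or> x = \<sigma> (\<sigma> (\<alpha> h))" using node_cases[OF x(1)] by simp
      then show False
        using x(2) h(3) ori_sigma_alpha[OF h(1)] ori_vertex[OF matching_dart_alpha[OF h(1)]] by auto
    qed
    moreover have "md x \<in> Mo (mi (md x))" using midx_spec[OF mdart_node[OF x(1)]] by simp
    ultimately have "mi (md x) \<noteq> i" using edge by auto
    then show ?thesis by (simp add: res_fun_upd_other)
  qed
  have "circle_perm (u(i := True)) = circle_perm (u(i := False)) \<circ> transpose (\<sigma> h) (\<sigma> (\<sigma> h))"
  proof (rule alternating_perm_swap)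
    show "ori (\<sigma> h)" "ori (\<sigma> (\<sigma> h))" using h(3) ori_vertex[OF h(1)] by simp_all
    show "resol (u(i := True)) (\<sigma> h) = resol (u(i := False)) (\<sigma> (\<sigma> h))"
      and "resol (u(i := True)) (\<sigma> (\<sigma> h)) = resol (u(i := False)) (\<sigma> h)"
      unfolding res_sigma[OF h(1)] mi_h by simp_all
  qed (use other nodes in simp_all)
  moreover have "\<sigma> h \<noteq> \<sigma> (\<sigma> h)" using rotation_darts[OF matching_dart[OF h(1)]] by auto
  ultimately show ?thesis using that nodes by blast
qed

lemma ncirc_fun_upd_ne:
  assumes "i < card M"
  shows "ncirc H \<alpha> vert \<sigma> M Mo (u(i := True)) \<noteq> ncirc H \<alpha> vert \<sigma> M Mo (u(i := False))"
proof -
  obtain a b where "a \<in> N" "b \<in> N" "a \<noteq> b"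
    and swap: "circle_perm (u(i := True)) = circle_perm (u(i := False)) \<circ> transpose a b"
    using circle_perm_fun_upd[OF assms] .
  then show ?thesis
    unfolding ncirc_eq_card_orbits swap
    using card_orbits_comp_transpose_ne[OF finite_nodes
        alternating_involutions.alternating_perm_permutes[OF alternating_involutions_res]]
    by simp
qed

lemma not_eta_arc:
  assumes rot': "vertex_rotation H vert \<sigma>'" and k: "k < card M" "\<not> v k"
  shows "\<not> eta_arc H \<alpha> vert \<sigma>' M Mo v k"
proof -
  let ?w = "state_shift \<alpha> \<sigma> \<sigma>' Mo" and ?c = "ncirc H \<alpha> vert \<sigma> M Mo"
  define u where "u = (\<lambda>j. v j \<noteq> ?w j)"
  have "ncirc H \<alpha> vert \<sigma>' M Mo (surg v k) = ?c (u(k := \<not> ?w k))"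
    unfolding ncirc_rotation_change[OF rot'] surg_def u_def
    by (rule arg_cong[where f = ?c]) (auto simp: fun_eq_iff)
  moreover have "ncirc H \<alpha> vert \<sigma>' M Mo v = ?c (u(k := ?w k))"
    unfolding ncirc_rotation_change[OF rot'] u_def
    by (rule arg_cong[where f = ?c]) (use k(2) in \<open>auto simp: fun_eq_iff\<close>)
  moreover have "?c (u(k := \<not> ?w k)) \<noteq> ?c (u(k := ?w k))"
    using ncirc_fun_upd_ne[OF k(1), of u] by (cases "?w k") auto
  ultimately show ?thesis by (simp add: eta_arc_def arc_change_def)
qed

lemma no_bad_face:
  assumes "vertex_rotation H vert \<sigma>'"
  shows "\<not> has_bad_face H \<alpha> vert \<sigma>' M Mo"
  using not_eta_arc[OF assms] by (auto simp: has_bad_face_def bad_face_cond_def)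

end

lemma consistent_orientation_exists:
  assumes pm: "pm_graph H \<alpha> vert \<sigma> M Mo" and co: "consistently_orientable_zero H \<alpha> vert \<sigma> M Mo"
    and ord': "matching_ordering M Mo'"
  obtains ori where "consistent_orientation H \<alpha> \<sigma> vert M Mo' ori"
proof -
  have base: "trivalent_graph H \<alpha> vert" "perfect_matching H \<alpha> vert M" "vertex_rotation H vert \<sigma>"
    "matching_ordering M Mo"
    using pm by (auto simp: pm_graph_def intro: plane_embedding_imp_vertex_rotation)
  interpret matched_rotation_system H \<alpha> \<sigma> vert M Mo
    using base by unfold_locales
  obtain ori :: "_ \<Rightarrow> bool" where ori: "\<forall>x \<in> N. ori (\<alpha> x) \<noteq> ori x \<and> ori (resol (\<lambda>_. False) x) \<noteq> ori x"
    "\<forall>i < card M. \<forall>h \<in> Mo i. ori (\<sigma> h) = ori (\<sigma> (\<sigma> h))"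
    using co unfolding consistently_orientable_zero_def by blast
  have "consistent_orientation H \<alpha> \<sigma> vert M Mo' ori"
  proof unfold_locales
    show "ori (res \<alpha> vert \<sigma> M Mo' (\<lambda>_. False) x) \<noteq> ori x" if "x \<in> N" for x
      using ori(1) that by (simp add: res_def Let_def)
    show "ori (\<sigma> h) = ori (\<sigma> (\<sigma> h))" if "h \<in> \<Union>M" for h
      using ori(2) midx_spec[OF that] by blast
  qed (use base ord' ori(1) in simp_all)
  then show ?thesis using that by blast
qed

theorem mainTheorem10:
  fixes H :: "'d set" and \<alpha> \<sigma> :: "'d \<Rightarrow> 'd" and vert :: "'d \<Rightarrow> 'v"
    and M :: "'d set set" and Mo :: "nat \<Rightarrow> 'd set"
  assumes "pm_graph H \<alpha> vert \<sigma> M Mo"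
    and "\<not> in_scrG H \<alpha> vert M"
    and "\<forall>i < card M. m_arc H \<alpha> vert \<sigma> M Mo (\<lambda>_. False) i"
  shows "\<not> consistently_orientable_zero H \<alpha> vert \<sigma> M Mo"
proof
  assume co: "consistently_orientable_zero H \<alpha> vert \<sigma> M Mo"
  have "in_scrG H \<alpha> vert M"
    unfolding in_scrG_def
  proof (intro allI impI)
    fix \<sigma>' Mo' assume "plane_embedding H \<alpha> vert \<sigma>' \<and> matching_ordering M Mo'"
    then have rot': "vertex_rotation H vert \<sigma>'" and ord': "matching_ordering M Mo'"
      by (auto intro: plane_embedding_imp_vertex_rotation)
    obtain ori where "consistent_orientation H \<alpha> \<sigma> vert M Mo' ori"
      using consistent_orientation_exists[OF assms(1) co ord'] .
    then show "\<not> has_bad_face H \<alpha> vert \<sigma>' M Mo'"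
      using rot' by (rule consistent_orientation.no_bad_face)
  qed
  with assms(2) show False by contradiction
qed

end
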